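(* Let $\langle A,\to\rangle$ be a conditional algebra. Then $\langle A,\to\rangle$ is a pseudo-subordination algebra (i.e., additionally satisfies $0\to a=1$ and $(a\to c)\wedge(b\to c)\le(a\vee b)\to c$ for all $a,b,c$) if and only if $T_A$ satisfies: for all ultrafilters $u,v$ and all $Y$, if $T_A(u,Y,v)$ then there exists $w\in Y$ such that $T_A(u,\{w\},v)$.
   Context: A conditional algebra is $\langle A,\to\rangle$ with $A$ a Boolean algebra and $\to$ binary with $a\to1=1$, $(a\to b)\wedge(a\to c)=a\to(b\wedge c)$, $(a\vee b)\to c\le(a\to c)\wedge(b\to c)$. Filters include the improper filter $A$; for a filter $F$, $\varphi(F)=\{u\in\mathrm{Ul}(A):F\subseteq u\}$ (so $\varphi(A)=\emptyset$). $D^{\to}_u(F)=\{b:\exists a\in F,\ a\to b\in u\}$; $T_A(u,Z,v)$ iff there is a filter $F$ with $Z=\varphi(F)$ and $D^{\to}_u(F)\subseteq v$. *)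

theory Defs
  imports Main
begin

definition conditional_algebra :: "('a::boolean_algebra \<Rightarrow> 'a \<Rightarrow> 'a) \<Rightarrow> bool" where
  "conditional_algebra imp \<longleftrightarrow>
     (\<forall>a. imp a top = top) \<and>
     (\<forall>a b c. inf (imp a b) (imp a c) = imp a (inf b c)) \<and>
     (\<forall>a b c. imp (sup a b) c \<le> inf (imp a c) (imp b c))"

definition pseudo_subordination_algebra :: "('a::boolean_algebra \<Rightarrow> 'a \<Rightarrow> 'a) \<Rightarrow> bool" where
  "pseudo_subordination_algebra imp \<longleftrightarrow>
     conditional_algebra imp \<and>
     (\<forall>a. imp bot a = top) \<and>
     (\<forall>a b c. inf (imp a c) (imp b c) \<le> imp (sup a b) c)"

text \<open>Filters (the improper filter UNIV included).\<close>
definition is_filter :: "'a::boolean_algebra set \<Rightarrow> bool" where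
  "is_filter F \<longleftrightarrow> top \<in> F \<and> (\<forall>a b. a \<in> F \<longrightarrow> a \<le> b \<longrightarrow> b \<in> F)
     \<and> (\<forall>a b. a \<in> F \<longrightarrow> b \<in> F \<longrightarrow> inf a b \<in> F)"

definition is_ultrafilter :: "'a::boolean_algebra set \<Rightarrow> bool" where
  "is_ultrafilter u \<longleftrightarrow> is_filter u \<and> u \<noteq> UNIV \<and>
     (\<forall>G. is_filter G \<longrightarrow> G \<noteq> UNIV \<longrightarrow> u \<subseteq> G \<longrightarrow> G = u)"

definition Ul :: "'a::boolean_algebra set set" where
  "Ul = {u. is_ultrafilter u}"

definition phi :: "'a::boolean_algebra set \<Rightarrow> 'a set set" where
  "phi F = {u \<in> Ul. F \<subseteq> u}"

definition D_imp :: "('a::boolean_algebra \<Rightarrow> 'a \<Rightarrow> 'a) \<Rightarrow> 'a set \<Rightarrow> 'a set \<Rightarrow> 'a set" where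
  "D_imp imp u F = {b. \<exists>a\<in>F. imp a b \<in> u}"

definition T_A :: "('a::boolean_algebra \<Rightarrow> 'a \<Rightarrow> 'a) \<Rightarrow> 'a set \<Rightarrow> 'a set set \<Rightarrow> 'a set \<Rightarrow> bool" where
  "T_A imp u Z v \<longleftrightarrow> (\<exists>F. is_filter F \<and> Z = phi F \<and> D_imp imp u F \<subseteq> v)"

end

theory Submission
  imports Defs
begin

text \<open>
  Both directions rest on the prime filter theorem. Suppose \<open>\<rightarrow>\<close> is a pseudo-subordination
  algebra and \<open>D\<^sup>\<rightarrow>\<^sub>u(F) \<subseteq> v\<close>. The antecedents \<open>a\<close> of some \<open>a \<rightarrow> b \<in> u\<close> with \<open>b \<notin> v\<close>
  form an ideal (it contains \<open>0\<close> since \<open>0 \<rightarrow> 0 = 1\<close>, and is closed under joins by the join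
  axiom and primeness of \<open>v\<close>) disjoint from \<open>F\<close>; an ultrafilter \<open>w \<supseteq> F\<close> avoiding it lies in
  \<open>\<phi>(F)\<close> and has \<open>D\<^sup>\<rightarrow>\<^sub>u(w) \<subseteq> v\<close>, i.e. \<open>T\<^sub>A(u, {w}, v)\<close>.
  Conversely, if all consequents of \<open>e\<close> in \<open>u\<close> lie in \<open>v\<close>, then \<open>T\<^sub>A(u, \<phi>(\<up>e), v)\<close>, so the
  witness property gives an ultrafilter \<open>w \<ni> e\<close> with \<open>D\<^sup>\<rightarrow>\<^sub>u(w) \<subseteq> v\<close>. For \<open>e = 0\<close> no such
  \<open>w\<close> exists, which puts \<open>0 \<rightarrow> 0\<close> into every ultrafilter; for \<open>e = a \<or> b\<close>, primeness of \<open>w\<close>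
  yields the join axiom.
\<close>

lemma filter_top: "is_filter F \<Longrightarrow> top \<in> F"
  unfolding is_filter_def by blast

lemma filter_mono: "is_filter F \<Longrightarrow> a \<in> F \<Longrightarrow> a \<le> b \<Longrightarrow> b \<in> F"
  unfolding is_filter_def by blast

lemma filter_inf: "is_filter F \<Longrightarrow> a \<in> F \<Longrightarrow> b \<in> F \<Longrightarrow> inf a b \<in> F"
  unfolding is_filter_def by blast

lemma filter_eq_UNIV_iff_bot: "is_filter F \<Longrightarrow> F = UNIV \<longleftrightarrow> bot \<in> F"
  unfolding is_filter_def by (metis UNIV_I UNIV_eq_I bot_least)

lemma filter_principal: "is_filter {z. x \<le> z}"
  unfolding is_filter_def by auto

lemma filter_adjoin:
  assumes "is_filter F"
  shows "is_filter {y. \<exists>g\<in>F. inf g x \<le> y}"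
  unfolding is_filter_def
proof (intro conjI allI impI)
  show "top \<in> {y. \<exists>g\<in>F. inf g x \<le> y}"
    using assms filter_top by auto
  show "b \<in> {y. \<exists>g\<in>F. inf g x \<le> y}" if "a \<in> {y. \<exists>g\<in>F. inf g x \<le> y}" "a \<le> b" for a b
    using that by (blast intro: order_trans)
  show "inf a b \<in> {y. \<exists>g\<in>F. inf g x \<le> y}"
    if ab: "a \<in> {y. \<exists>g\<in>F. inf g x \<le> y}" "b \<in> {y. \<exists>g\<in>F. inf g x \<le> y}" for a b
  proof -
    obtain g h where "g \<in> F" "h \<in> F" "inf g x \<le> a" "inf h x \<le> b"
      using ab by blast
    moreover have "inf (inf g h) x \<le> inf (inf g x) (inf h x)"
      by (simp add: le_infI1 le_infI2)
    ultimately show ?thesis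
      using assms filter_inf by (blast intro: order_trans inf_mono)
  qed
qed

lemma filter_Union_chain:
  assumes "C \<noteq> {}" "\<forall>G\<in>C. is_filter G" "\<forall>X\<in>C. \<forall>Y\<in>C. X \<subseteq> Y \<or> Y \<subseteq> X"
  shows "is_filter (\<Union>C)"
  unfolding is_filter_def
proof (intro conjI allI impI)
  show "top \<in> \<Union>C"
    using assms(1,2) filter_top by blast
  show "b \<in> \<Union>C" if "a \<in> \<Union>C" "a \<le> b" for a b
    using that assms(2) filter_mono by blast
  show "inf a b \<in> \<Union>C" if ab: "a \<in> \<Union>C" "b \<in> \<Union>C" for a b
  proof -
    obtain G where "G \<in> C" "a \<in> G" "b \<in> G"
      using ab assms(3) by blast
    then show ?thesis
      using assms(2) filter_inf by blast
  qed
qed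

definition is_ideal :: "'a::boolean_algebra set \<Rightarrow> bool" where
  "is_ideal I \<longleftrightarrow> bot \<in> I \<and> (\<forall>a b. b \<in> I \<longrightarrow> a \<le> b \<longrightarrow> a \<in> I)
     \<and> (\<forall>a b. a \<in> I \<longrightarrow> b \<in> I \<longrightarrow> sup a b \<in> I)"

lemma ideal_principal: "is_ideal {z. z \<le> x}"
  unfolding is_ideal_def by auto

lemma ultrafilterI:
  assumes "is_filter u" "bot \<notin> u" "\<And>x. x \<in> u \<or> - x \<in> u"
  shows "is_ultrafilter u"
  unfolding is_ultrafilter_def
proof (intro conjI allI impI)
  show "u \<noteq> UNIV"
    using assms(2) by blast
  show "G = u" if G: "is_filter G" "G \<noteq> UNIV" "u \<subseteq> G" for G
  proof
    show "G \<subseteq> u"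
    proof
      fix x assume "x \<in> G"
      show "x \<in> u"
      proof (rule ccontr)
        assume "x \<notin> u"
        then have "inf x (- x) \<in> G"
          using assms(3) G(1,3) \<open>x \<in> G\<close> filter_inf by blast
        then show False
          using G(1,2) filter_eq_UNIV_iff_bot by auto
      qed
    qed
  qed (use G in blast)
qed (use assms in blast)

lemma ultrafilter_filter: "is_ultrafilter u \<Longrightarrow> is_filter u"
  unfolding is_ultrafilter_def by blast

lemma ultrafilter_bot: "is_ultrafilter u \<Longrightarrow> bot \<notin> u"
  unfolding is_ultrafilter_def using filter_eq_UNIV_iff_bot by blast

lemma ultrafilter_compl:
  assumes u: "is_ultrafilter u" and "x \<notin> u"
  shows "- x \<in> u"
proof -
  let ?H = "{y. \<exists>g\<in>u. inf g x \<le> y}"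
  have "x \<in> ?H"
    using ultrafilter_filter[OF u] filter_top by fastforce
  moreover have "u \<subseteq> ?H"
    by (auto intro: inf_le1)
  ultimately have "?H = UNIV"
    using u filter_adjoin[OF ultrafilter_filter[OF u]] \<open>x \<notin> u\<close>
    unfolding is_ultrafilter_def by blast
  then obtain g where "g \<in> u" "inf g x \<le> bot"
    by blast
  then have "g \<le> - x"
    by (simp add: bot_unique inf_shunt)
  then show ?thesis
    using \<open>g \<in> u\<close> ultrafilter_filter[OF u] filter_mono by blast
qed

lemma ultrafilter_sup:
  assumes u: "is_ultrafilter u" and "sup x y \<in> u"
  shows "x \<in> u \<or> y \<in> u"
proof (rule ccontr)
  assume "\<not> (x \<in> u \<or> y \<in> u)"
  then have "inf (sup x y) (inf (- x) (- y)) \<in> u"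
    using assms ultrafilter_compl ultrafilter_filter filter_inf by metis
  moreover have "inf (sup x y) (inf (- x) (- y)) = bot"
    by (metis compl_sup inf_compl_bot)
  ultimately show False
    using ultrafilter_bot[OF u] by simp
qed

lemma ultrafilter_if_maximal_disjoint:
  assumes M: "is_filter M" and I: "is_ideal I" and disj: "M \<inter> I = {}"
    and maximal: "\<And>G. is_filter G \<Longrightarrow> M \<subseteq> G \<Longrightarrow> G \<inter> I = {} \<Longrightarrow> G = M"
  shows "is_ultrafilter M"
proof (rule ultrafilterI[OF M])
  have meets_I: "\<exists>g\<in>M. inf g x \<in> I" if "x \<notin> M" for x
  proof (rule ccontr)
    let ?H = "{y. \<exists>g\<in>M. inf g x \<le> y}"
    assume "\<not> (\<exists>g\<in>M. inf g x \<in> I)"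
    then have "?H \<inter> I = {}"
      using I unfolding is_ideal_def by blast
    moreover have "M \<subseteq> ?H"
      by (auto intro: inf_le1)
    ultimately have "?H = M"
      using maximal filter_adjoin[OF M] by blast
    moreover have "x \<in> ?H"
      using M filter_top by fastforce
    ultimately show False
      using that by blast
  qed
  show "x \<in> M \<or> - x \<in> M" for x
  proof (rule ccontr)
    assume "\<not> (x \<in> M \<or> - x \<in> M)"
    then obtain g h where gh: "g \<in> M" "h \<in> M" "inf g x \<in> I" "inf h (- x) \<in> I"
      using meets_I by meson
    have "inf g h = sup (inf (inf g h) x) (inf (inf g h) (- x))"
      by (metis inf_sup_distrib1 inf_top_right sup_compl_top)
    also have "\<dots> \<le> sup (inf g x) (inf h (- x))"
      by (intro sup_mono inf_mono) auto
    finally have "inf g h \<in> I"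
      using gh(3,4) I unfolding is_ideal_def by blast
    then show False
      using gh(1,2) M disj filter_inf by blast
  qed
  show "bot \<notin> M"
    using I disj unfolding is_ideal_def by blast
qed

lemma ultrafilter_separation:
  assumes F: "is_filter F" and I: "is_ideal I" and disj: "F \<inter> I = {}"
  shows "\<exists>u. is_ultrafilter u \<and> F \<subseteq> u \<and> u \<inter> I = {}"
proof -
  define A where "A = {G. is_filter G \<and> F \<subseteq> G \<and> G \<inter> I = {}}"
  have "\<exists>M\<in>A. \<forall>X\<in>A. M \<subseteq> X \<longrightarrow> X = M"
  proof (rule subset_Zorn_nonempty)
    show "A \<noteq> {}"
      using F disj unfolding A_def by blast
    show "\<Union>C \<in> A" if "C \<noteq> {}" "subset.chain A C" for C
      using that filter_Union_chain[of C]
      unfolding A_def subset_chain_def by blast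
  qed
  then obtain M where "M \<in> A" and M_max: "\<forall>X\<in>A. M \<subseteq> X \<longrightarrow> X = M"
    by blast
  then have M: "is_filter M" "F \<subseteq> M" "M \<inter> I = {}"
    unfolding A_def by auto
  have "G = M" if "is_filter G" "M \<subseteq> G" "G \<inter> I = {}" for G
    using that M(2) M_max unfolding A_def by blast
  then have "is_ultrafilter M"
    using ultrafilter_if_maximal_disjoint[OF M(1) I M(3)] by blast
  then show ?thesis
    using M by blast
qed

lemma ultrafilter_avoiding:
  assumes "is_filter F" "a \<notin> F"
  shows "\<exists>u. is_ultrafilter u \<and> F \<subseteq> u \<and> a \<notin> u"
proof -
  have "F \<inter> {z. z \<le> a} = {}"
    using assms filter_mono by blast
  then show ?thesis
    using ultrafilter_separation[OF assms(1) ideal_principal] by blast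
qed

lemma Inter_phi:
  assumes "is_filter F"
  shows "\<Inter> (phi F) = F"
proof
  show "F \<subseteq> \<Inter> (phi F)"
    unfolding phi_def by blast
  show "\<Inter> (phi F) \<subseteq> F"
  proof
    fix a assume a: "a \<in> \<Inter> (phi F)"
    show "a \<in> F"
    proof (rule ccontr)
      assume "a \<notin> F"
      then obtain u where "is_ultrafilter u" "F \<subseteq> u" "a \<notin> u"
        using ultrafilter_avoiding[OF assms] by blast
      then show False
        using a unfolding phi_def Ul_def by blast
    qed
  qed
qed

lemma phi_ultrafilter:
  assumes "is_ultrafilter w"
  shows "phi w = {w}"
proof -
  have "u = w" if "is_ultrafilter u" "w \<subseteq> u" for u
    using that assms unfolding is_ultrafilter_def by metis
  then show ?thesis
    using assms unfolding phi_def Ul_def by blast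
qed

lemma le_iff_ultrafilters: "x \<le> y \<longleftrightarrow> (\<forall>u\<in>Ul. x \<in> u \<longrightarrow> y \<in> u)"
proof
  show "\<forall>u\<in>Ul. x \<in> u \<longrightarrow> y \<in> u" if "x \<le> y"
    using that ultrafilter_filter filter_mono unfolding Ul_def by blast
  show "x \<le> y" if "\<forall>u\<in>Ul. x \<in> u \<longrightarrow> y \<in> u"
  proof (rule ccontr)
    assume "\<not> x \<le> y"
    then obtain u where "is_ultrafilter u" "x \<in> u" "y \<notin> u"
      using ultrafilter_avoiding[OF filter_principal, of y x] by auto
    then show False
      using that unfolding Ul_def by blast
  qed
qed

lemma T_A_singleton_iff:
  assumes "is_ultrafilter w"
  shows "T_A imp u {w} v \<longleftrightarrow> D_imp imp u w \<subseteq> v"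
proof
  assume "T_A imp u {w} v"
  then obtain F where F: "is_filter F" "{w} = phi F" "D_imp imp u F \<subseteq> v"
    unfolding T_A_def by blast
  have "F = w"
    using Inter_phi[OF F(1)] unfolding F(2)[symmetric] by simp
  then show "D_imp imp u w \<subseteq> v"
    using F(3) by simp
next
  assume "D_imp imp u w \<subseteq> v"
  then show "T_A imp u {w} v"
    unfolding T_A_def using ultrafilter_filter[OF assms] phi_ultrafilter[OF assms] by blast
qed

lemma imp_mono_right:
  assumes "conditional_algebra imp" "b \<le> c"
  shows "imp a b \<le> imp a c"
proof -
  have "imp a b = inf (imp a b) (imp a c)"
    using assms unfolding conditional_algebra_def by (simp add: inf_absorb1)
  then show ?thesis
    by (metis inf.orderI inf_commute)
qed

lemma imp_antimono_left:
  assumes "conditional_algebra imp" "a \<le> b"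
  shows "imp b c \<le> imp a c"
proof -
  have "imp b c = imp (sup a b) c"
    using assms(2) by (simp add: sup_absorb2)
  also have "\<dots> \<le> inf (imp a c) (imp b c)"
    using assms(1) unfolding conditional_algebra_def by blast
  finally show ?thesis
    by simp
qed

lemma filter_consequents:
  assumes ca: "conditional_algebra imp" and u: "is_filter u"
  shows "is_filter {d. imp e d \<in> u}"
  unfolding is_filter_def
proof (intro conjI allI impI)
  show "top \<in> {d. imp e d \<in> u}"
    using ca u filter_top unfolding conditional_algebra_def by simp
  show "b \<in> {d. imp e d \<in> u}" if "a \<in> {d. imp e d \<in> u}" "a \<le> b" for a b
    using that imp_mono_right[OF ca] u filter_mono by blast
  show "inf a b \<in> {d. imp e d \<in> u}" if "a \<in> {d. imp e d \<in> u}" "b \<in> {d. imp e d \<in> u}" for a b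
    using that u filter_inf ca unfolding conditional_algebra_def by fastforce
qed

lemma D_imp_principal:
  assumes "conditional_algebra imp" "is_filter u"
  shows "D_imp imp u {z. e \<le> z} = {d. imp e d \<in> u}"
  unfolding D_imp_def
  using assms imp_antimono_left filter_mono by blast

lemma ideal_bad_antecedents:
  assumes psa: "pseudo_subordination_algebra imp"
    and u: "is_filter u" and v: "is_ultrafilter v"
  shows "is_ideal {a. \<exists>b. b \<notin> v \<and> imp a b \<in> u}"
  unfolding is_ideal_def
proof (intro conjI allI impI)
  have ca: "conditional_algebra imp"
    using psa unfolding pseudo_subordination_algebra_def by blast
  show "bot \<in> {a. \<exists>b. b \<notin> v \<and> imp a b \<in> u}"
    using psa u v filter_top ultrafilter_bot
    unfolding pseudo_subordination_algebra_def by fastforce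
  show "a \<in> {a. \<exists>b. b \<notin> v \<and> imp a b \<in> u}"
    if "b \<in> {a. \<exists>b. b \<notin> v \<and> imp a b \<in> u}" "a \<le> b" for a b
    using that u imp_antimono_left[OF ca] filter_mono by blast
  show "sup a b \<in> {a. \<exists>b. b \<notin> v \<and> imp a b \<in> u}"
    if ab: "a \<in> {a. \<exists>b. b \<notin> v \<and> imp a b \<in> u}" "b \<in> {a. \<exists>b. b \<notin> v \<and> imp a b \<in> u}" for a b
  proof -
    obtain c d where cd: "c \<notin> v" "d \<notin> v" "imp a c \<in> u" "imp b d \<in> u"
      using ab by blast
    then have "imp a (sup c d) \<in> u" "imp b (sup c d) \<in> u"
      using u imp_mono_right[OF ca] filter_mono by (metis sup_ge1 sup_ge2)+
    then have "imp (sup a b) (sup c d) \<in> u"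
      using psa u filter_inf filter_mono unfolding pseudo_subordination_algebra_def by metis
    moreover have "sup c d \<notin> v"
      using cd ultrafilter_sup[OF v] by blast
    ultimately show ?thesis
      by blast
  qed
qed

definition T_A_point_witnessed :: "('a::boolean_algebra \<Rightarrow> 'a \<Rightarrow> 'a) \<Rightarrow> bool" where
  "T_A_point_witnessed imp \<longleftrightarrow>
     (\<forall>u\<in>Ul. \<forall>v\<in>Ul. \<forall>Y. T_A imp u Y v \<longrightarrow> (\<exists>w\<in>Y. T_A imp u {w} v))"

lemma T_A_point_witness:
  assumes psa: "pseudo_subordination_algebra imp"
    and u: "u \<in> Ul" and v: "v \<in> Ul" and "T_A imp u Y v"
  shows "\<exists>w\<in>Y. T_A imp u {w} v"
proof -
  obtain F where F: "is_filter F" "Y = phi F" "D_imp imp u F \<subseteq> v"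
    using \<open>T_A imp u Y v\<close> unfolding T_A_def by blast
  let ?I = "{a. \<exists>b. b \<notin> v \<and> imp a b \<in> u}"
  have "F \<inter> ?I = {}"
    using F(3) unfolding D_imp_def by blast
  then obtain w where w: "is_ultrafilter w" "F \<subseteq> w" "w \<inter> ?I = {}"
    using ultrafilter_separation[OF F(1) ideal_bad_antecedents[OF psa]] u v ultrafilter_filter
    unfolding Ul_def by blast
  have "w \<in> Y"
    using w F(2) unfolding phi_def Ul_def by blast
  moreover have "D_imp imp u w \<subseteq> v"
    using w(3) unfolding D_imp_def by blast
  ultimately show ?thesis
    using T_A_singleton_iff[OF w(1)] by blast
qed

lemma principal_point_witness:
  assumes ca: "conditional_algebra imp" and witnessed: "T_A_point_witnessed imp"
    and u: "is_ultrafilter u" and v: "is_ultrafilter v" and consequents: "{d. imp e d \<in> u} \<subseteq> v"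
  shows "\<exists>w. is_ultrafilter w \<and> e \<in> w \<and> D_imp imp u w \<subseteq> v"
proof -
  have "D_imp imp u {z. e \<le> z} \<subseteq> v"
    using D_imp_principal[OF ca ultrafilter_filter[OF u]] consequents by simp
  then have "T_A imp u (phi {z. e \<le> z}) v"
    unfolding T_A_def using filter_principal by blast
  then obtain w where "w \<in> phi {z. e \<le> z}" "T_A imp u {w} v"
    using witnessed u v unfolding T_A_point_witnessed_def Ul_def by blast
  moreover from this have "is_ultrafilter w" "e \<in> w"
    unfolding phi_def Ul_def by auto
  ultimately show ?thesis
    using T_A_singleton_iff by blast
qed

lemma imp_bot_eq_top:
  assumes ca: "conditional_algebra imp" and witnessed: "T_A_point_witnessed imp"
  shows "imp bot a = top"
proof -
  have in_all: "imp bot bot \<in> u" if u: "is_ultrafilter u" for u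
  proof (rule ccontr)
    assume "imp bot bot \<notin> u"
    then obtain v where "is_ultrafilter v" "{d. imp bot d \<in> u} \<subseteq> v"
      using ultrafilter_avoiding[OF filter_consequents[OF ca ultrafilter_filter[OF u]], of bot]
      by blast
    then show False
      using principal_point_witness[OF ca witnessed u] ultrafilter_bot by blast
  qed
  have "top \<le> imp bot bot"
    unfolding le_iff_ultrafilters Ul_def using in_all by blast
  then show ?thesis
    using imp_mono_right[OF ca, of bot a bot] by (simp add: top_unique)
qed

lemma imp_sup_ge:
  assumes ca: "conditional_algebra imp" and witnessed: "T_A_point_witnessed imp"
  shows "inf (imp a c) (imp b c) \<le> imp (sup a b) c"
  unfolding le_iff_ultrafilters Ul_def
proof (intro ballI impI, unfold mem_Collect_eq)
  fix u assume u: "is_ultrafilter u" and "inf (imp a c) (imp b c) \<in> u"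
  then have ac_bc: "imp a c \<in> u" "imp b c \<in> u"
    using filter_mono[OF ultrafilter_filter[OF u]] by (meson inf_le1 inf_le2)+
  show "imp (sup a b) c \<in> u"
  proof (rule ccontr)
    assume "imp (sup a b) c \<notin> u"
    then obtain v where v: "is_ultrafilter v" "{d. imp (sup a b) d \<in> u} \<subseteq> v" "c \<notin> v"
      using ultrafilter_avoiding[OF filter_consequents[OF ca ultrafilter_filter[OF u]], of c]
      by blast
    then obtain w where w: "is_ultrafilter w" "sup a b \<in> w" "D_imp imp u w \<subseteq> v"
      using principal_point_witness[OF ca witnessed u] by blast
    then have "c \<in> D_imp imp u w"
      using ultrafilter_sup ac_bc unfolding D_imp_def by blast
    then show False
      using w(3) v(3) by blast
  qed
qed

theorem theorem9p4:
  fixes imp :: "'a::boolean_algebra \<Rightarrow> 'a \<Rightarrow> 'a"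
  assumes "conditional_algebra imp"
  shows "pseudo_subordination_algebra imp \<longleftrightarrow>
    (\<forall>u\<in>Ul. \<forall>v\<in>Ul. \<forall>Y. T_A imp u Y v \<longrightarrow> (\<exists>w\<in>Y. T_A imp u {w} v))"
proof -
  have "pseudo_subordination_algebra imp \<longleftrightarrow> T_A_point_witnessed imp"
  proof
    show "T_A_point_witnessed imp" if "pseudo_subordination_algebra imp"
      unfolding T_A_point_witnessed_def using T_A_point_witness[OF that] by blast
    show "pseudo_subordination_algebra imp" if "T_A_point_witnessed imp"
      unfolding pseudo_subordination_algebra_def
      using assms imp_bot_eq_top[OF assms that] imp_sup_ge[OF assms that] by blast
  qed
  then show ?thesis
    unfolding T_A_point_witnessed_def .
qed

end
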